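(* For $n\geq 1$, $$\sum_{\pi\in\mathfrak{S}_n(2413,3142)}t^{\mathrm{des}(\pi)}=\sum_{T\in \mathfrak{D}\mathfrak{T}_n} t^{n_\ominus(T)}.$$
   Context: $\mathfrak{S}_n(2413,3142)$ is the set of permutations of $[n]$ avoiding the patterns $2413$ and $3142$; $\mathrm{des}(\pi)=\#\{i\in[n-1]:\pi_i>\pi_{i+1}\}$. A binary tree is either empty or consists of a root together with a left subtree and a right subtree, both binary trees. A right chain of a binary tree is a maximal sequence of nodes $v_1,\dots,v_l$ in which $v_1$ is either the root or a left child and each $v_{j+1}$ is the right child of $v_j$. A di-sk tree is a binary tree whose nodes are labelled $\oplus$ or $\ominus$ such that along every right chain the labels alternate. $\mathfrak{D}\mathfrak{T}_n$ is the set of di-sk trees with $n-1$ nodes (for $n=1$ only the empty tree), and $n_\ominus(T)$ is the number of nodes labelled $\ominus$. *)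

theory Defs
  imports Main "HOL-Library.Tree" "HOL-Computational_Algebra.Polynomial"
begin

definition perms_of :: "nat \<Rightarrow> nat list set" where
  "perms_of n = {\<pi>. distinct \<pi> \<and> set \<pi> = {1..n}}"

definition contains_pattern :: "nat list \<Rightarrow> nat list \<Rightarrow> bool" where
  "contains_pattern \<pi> \<sigma> \<longleftrightarrow>
     (\<exists>f::nat \<Rightarrow> nat. (\<forall>a b. a < b \<and> b < length \<sigma> \<longrightarrow> f a < f b)
        \<and> (\<forall>a < length \<sigma>. f a < length \<pi>)
        \<and> (\<forall>a < length \<sigma>. \<forall>b < length \<sigma>.
              (\<pi> ! f a < \<pi> ! f b) \<longleftrightarrow> (\<sigma> ! a < \<sigma> ! b)))"

definition avoiding_perms :: "nat \<Rightarrow> nat list list \<Rightarrow> nat list set" where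
  "avoiding_perms n pats = {\<pi> \<in> perms_of n. \<forall>\<sigma> \<in> set pats. \<not> contains_pattern \<pi> \<sigma>}"

definition des :: "nat list \<Rightarrow> nat" where
  "des \<pi> = card {i. Suc i < length \<pi> \<and> \<pi> ! i > \<pi> ! Suc i}"

text \<open>Labelled binary trees: label True = oplus, False = ominus.\<close>
fun disk :: "bool tree \<Rightarrow> bool" where
  "disk Leaf = True"
| "disk (Node l a r) = (disk l \<and> disk r \<and> (case r of Leaf \<Rightarrow> True | Node _ b _ \<Rightarrow> b \<noteq> a))"

definition disk_trees :: "nat \<Rightarrow> bool tree set" where
  "disk_trees n = {T. disk T \<and> size T = n - 1}"

fun n_ominus :: "bool tree \<Rightarrow> nat" where
  "n_ominus Leaf = 0"
| "n_ominus (Node l a r) = n_ominus l + n_ominus r + (if a then 0 else 1)"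

end

theory Submission
  imports Defs "HOL-Library.Sublist"
begin

text \<open>
  Separable permutations, those avoiding 2413 and 3142, are exactly the permutations built from 1
  by direct sums (\<open>\<oplus>\<close>) and skew sums (\<open>\<ominus>\<close>). A di-sk tree records such a construction: each node
  says which sum is taken, and the alternation along right chains says that the right summand
  cannot itself be split in the same direction, i.e. the split with the longest left block is
  chosen; this makes the encoding bijective. A separable permutation of length at least 2 always
  splits: remove its maximal entry, split the rest by induction and put the maximum back; a
  2413 or 3142 is the only obstruction to a split of the whole permutation. Finally a direct sum
  creates no descent at the junction and a skew sum exactly one, so descents count the
  \<open>\<ominus>\<close>-nodes.
\<close>

definition pattern_embedding :: "nat list \<Rightarrow> nat list \<Rightarrow> (nat \<Rightarrow> nat) \<Rightarrow> bool" where
  "pattern_embedding \<pi> \<sigma> f \<longleftrightarrow>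
     (\<forall>a b. a < b \<and> b < length \<sigma> \<longrightarrow> f a < f b) \<and> (\<forall>a < length \<sigma>. f a < length \<pi>) \<and>
     (\<forall>a < length \<sigma>. \<forall>b < length \<sigma>. (\<pi> ! f a < \<pi> ! f b) \<longleftrightarrow> (\<sigma> ! a < \<sigma> ! b))"

lemma contains_pattern_iff_embedding: "contains_pattern \<pi> \<sigma> \<longleftrightarrow> (\<exists>f. pattern_embedding \<pi> \<sigma> f)"
  unfolding contains_pattern_def pattern_embedding_def ..

lemma subseq_embedding:
  "subseq xs ys \<Longrightarrow> \<exists>g. strict_mono g \<and> (\<forall>i<length xs. g i < length ys \<and> ys ! g i = xs ! i)"
proof (induction rule: list_emb.induct)
  case (list_emb_Nil ys)
  show ?case by (intro exI[of _ id]) (simp add: strict_mono_def)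
next
  case (list_emb_Cons xs ys y)
  then obtain g where "strict_mono g" "\<forall>i<length xs. g i < length ys \<and> ys ! g i = xs ! i"
    by blast
  then show ?case by (intro exI[of _ "Suc \<circ> g"]) (simp add: strict_mono_def)
next
  case (list_emb_Cons2 x y xs ys)
  then obtain g where g: "strict_mono g" "\<forall>i<length xs. g i < length ys \<and> ys ! g i = xs ! i"
    by blast
  let ?g = "\<lambda>i. case i of 0 \<Rightarrow> 0 | Suc j \<Rightarrow> Suc (g j)"
  have "strict_mono ?g"
    using g(1) by (auto simp: strict_mono_Suc_iff split: nat.split)
  then show ?case using g(2) list_emb_Cons2.hyps(1) by (intro exI[of _ ?g]) (auto split: nat.split)
qed

lemma contains_pattern_subseq:
  assumes "subseq \<pi>' \<pi>" "contains_pattern \<pi>' \<sigma>"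
  shows "contains_pattern \<pi> \<sigma>"
proof -
  obtain g where g: "strict_mono g" "\<forall>i<length \<pi>'. g i < length \<pi> \<and> \<pi> ! g i = \<pi>' ! i"
    using subseq_embedding[OF assms(1)] by blast
  obtain f where "pattern_embedding \<pi>' \<sigma> f"
    using assms(2) unfolding contains_pattern_iff_embedding by blast
  then have "pattern_embedding \<pi> \<sigma> (g \<circ> f)"
    using g unfolding pattern_embedding_def by (auto simp: strict_mono_less)
  then show ?thesis
    unfolding contains_pattern_iff_embedding by blast
qed

lemma contains_pattern_map_strict_mono:
  assumes "strict_mono h"
  shows "contains_pattern (map h \<pi>) \<sigma> \<longleftrightarrow> contains_pattern \<pi> \<sigma>"
proof -
  have "(map h \<pi> ! f a < map h \<pi> ! f b) = (\<pi> ! f a < \<pi> ! f b)"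
    if "f a < length \<pi>" "f b < length \<pi>" for f :: "nat \<Rightarrow> nat" and a b
    using that by (simp add: strict_mono_less[OF assms])
  then show ?thesis
    unfolding contains_pattern_def length_map by (intro ex_cong1) auto
qed

lemma contains_pattern_length_le:
  assumes "contains_pattern \<pi> \<sigma>"
  shows "length \<sigma> \<le> length \<pi>"
proof -
  obtain f where f: "\<forall>a b. a < b \<and> b < length \<sigma> \<longrightarrow> f a < f b" "\<forall>a < length \<sigma>. f a < length \<pi>"
    using assms unfolding contains_pattern_def by blast
  have "inj_on f {..<length \<sigma>}"
    using f(1) by (auto simp: inj_on_def) (metis linorder_neqE_nat less_irrefl)
  moreover have "f ` {..<length \<sigma>} \<subseteq> {..<length \<pi>}"
    using f(2) by auto
  ultimately show ?thesis
    using card_inj_on_le[of f "{..<length \<sigma>}" "{..<length \<pi>}"] by simp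
qed

lemma subseq_four:
  "a \<in> set as \<Longrightarrow> b \<in> set bs \<Longrightarrow> c \<in> set cs \<Longrightarrow> d \<in> set ds \<Longrightarrow>
   subseq [a, b, c, d] (as @ bs @ cs @ ds)"
  using list_emb_append_mono[of "(=)" "[a]" as "[b] @ [c] @ [d]" "bs @ cs @ ds"]
    list_emb_append_mono[of "(=)" "[b]" bs "[c] @ [d]" "cs @ ds"]
    list_emb_append_mono[of "(=)" "[c]" cs "[d]" ds]
  by (simp add: subseq_singleton_left)

lemma contains_pattern_2413:
  assumes "c < a" "a < d" "d < b"
  shows "contains_pattern [a, b, c, d] [2,4,1,3]"
  unfolding contains_pattern_def
  using assms by (intro exI[of _ id]) (auto simp: less_Suc_eq numeral_eq_Suc)

lemma contains_pattern_3142: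
  assumes "b < d" "d < a" "a < c"
  shows "contains_pattern [a, b, c, d] [3,1,4,2]"
  unfolding contains_pattern_def
  using assms by (intro exI[of _ id]) (auto simp: less_Suc_eq numeral_eq_Suc)

definition separated :: "bool \<Rightarrow> 'a::linorder list \<Rightarrow> 'a list \<Rightarrow> bool" where
  "separated c xs ys \<longleftrightarrow> (\<forall>x\<in>set xs. \<forall>y\<in>set ys. (x < y) = c)"

text \<open>\<open>decomposable True\<close>: a direct sum of two nonempty blocks; \<open>decomposable False\<close>: a skew sum.\<close>

definition decomposable :: "bool \<Rightarrow> 'a::linorder list \<Rightarrow> bool" where
  "decomposable c zs \<longleftrightarrow> (\<exists>xs ys. zs = xs @ ys \<and> xs \<noteq> [] \<and> ys \<noteq> [] \<and> separated c xs ys)"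

lemma decomposableI:
  "separated c xs ys \<Longrightarrow> xs \<noteq> [] \<Longrightarrow> ys \<noteq> [] \<Longrightarrow> decomposable c (xs @ ys)"
  unfolding decomposable_def by blast

lemma separated_mono:
  "separated c xs ys \<Longrightarrow> set xs' \<subseteq> set xs \<Longrightarrow> set ys' \<subseteq> set ys \<Longrightarrow> separated c xs' ys'"
  unfolding separated_def by blast

lemma separated_map_strict_mono:
  "strict_mono h \<Longrightarrow> separated c (map h xs) (map h ys) \<longleftrightarrow> separated c xs ys"
  unfolding separated_def by (simp add: strict_mono_less)

lemma decomposable_map_strict_mono:
  assumes "strict_mono h"
  shows "decomposable c (map h zs) \<longleftrightarrow> decomposable c zs"
proof
  assume "decomposable c (map h zs)"
  then obtain xs ys where "map h zs = xs @ ys" "xs \<noteq> []" "ys \<noteq> []" "separated c xs ys"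
    unfolding decomposable_def by blast
  then obtain us vs where "zs = us @ vs" "us \<noteq> []" "vs \<noteq> []" "separated c (map h us) (map h vs)"
    by (auto simp: map_eq_append_conv)
  then show "decomposable c zs"
    unfolding decomposable_def separated_map_strict_mono[OF assms] by blast
next
  assume "decomposable c zs"
  then obtain us vs where "zs = us @ vs" "us \<noteq> []" "vs \<noteq> []" "separated c us vs"
    unfolding decomposable_def by blast
  then show "decomposable c (map h zs)"
    using decomposableI[of c "map h us" "map h vs"] by (simp add: separated_map_strict_mono[OF assms])
qed

lemma decomposable_hd_last: "decomposable c zs \<Longrightarrow> (hd zs < last zs) = c"
  unfolding decomposable_def separated_def by auto

lemma not_decomposable_2413: "\<not> decomposable c [2,4,1,3::nat]"
  and not_decomposable_3142: "\<not> decomposable c [3,1,4,2::nat]"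
  by (auto simp: decomposable_def separated_def Cons_eq_append_conv)

lemma pattern_embedding_append_left:
  assumes "pattern_embedding (xs @ ys) \<sigma> f" and left: "\<forall>a < length \<sigma>. f a < length xs"
  shows "pattern_embedding xs \<sigma> f"
proof -
  have mono: "\<forall>a b. a < b \<and> b < length \<sigma> \<longrightarrow> f a < f b"
    and order: "\<forall>a < length \<sigma>. \<forall>b < length \<sigma>. ((xs @ ys) ! f a < (xs @ ys) ! f b) = (\<sigma> ! a < \<sigma> ! b)"
    using assms(1) unfolding pattern_embedding_def by blast+
  have "(xs ! f a < xs ! f b) = (\<sigma> ! a < \<sigma> ! b)" if "a < length \<sigma>" "b < length \<sigma>" for a b
    using order left that by (simp add: nth_append)
  then show ?thesis
    unfolding pattern_embedding_def using mono left by blast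
qed

lemma pattern_embedding_append_right:
  assumes "pattern_embedding (xs @ ys) \<sigma> f" and right: "\<forall>a < length \<sigma>. length xs \<le> f a"
  shows "pattern_embedding ys \<sigma> (\<lambda>a. f a - length xs)"
proof -
  have mono: "\<forall>a b. a < b \<and> b < length \<sigma> \<longrightarrow> f a < f b"
    and bound: "\<forall>a < length \<sigma>. f a < length xs + length ys"
    and order: "\<forall>a < length \<sigma>. \<forall>b < length \<sigma>. ((xs @ ys) ! f a < (xs @ ys) ! f b) = (\<sigma> ! a < \<sigma> ! b)"
    using assms(1) unfolding pattern_embedding_def by auto
  have "f a - length xs < f b - length xs" if "a < b" "b < length \<sigma>" for a b
    using mono right that by (meson diff_less_mono less_trans)
  moreover have "f a - length xs < length ys" if "a < length \<sigma>" for a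
  proof -
    have "f a < length xs + length ys" "length xs \<le> f a"
      using bound right that by auto
    then show ?thesis
      by linarith
  qed
  moreover have "(ys ! (f a - length xs) < ys ! (f b - length xs)) = (\<sigma> ! a < \<sigma> ! b)"
    if "a < length \<sigma>" "b < length \<sigma>" for a b
    using order right that by (simp add: nth_append not_less[symmetric])
  ultimately show ?thesis
    unfolding pattern_embedding_def by blast
qed

lemma decomposable_if_embedding_straddles:
  assumes f: "pattern_embedding (xs @ ys) \<sigma> f" and "separated c xs ys" "0 < k" "k < length \<sigma>"
    and left: "\<forall>a < k. f a < length xs" and right: "\<forall>b. k \<le> b \<and> b < length \<sigma> \<longrightarrow> length xs \<le> f b"
  shows "decomposable c \<sigma>"
proof -
  have "separated c (take k \<sigma>) (drop k \<sigma>)"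
    unfolding separated_def
  proof (intro ballI)
    fix x y assume "x \<in> set (take k \<sigma>)" "y \<in> set (drop k \<sigma>)"
    then obtain a i where ai: "a < k" "x = \<sigma> ! a" "i < length \<sigma> - k" "y = \<sigma> ! (k + i)"
      by (auto simp: in_set_conv_nth)
    define b where "b = k + i"
    have b: "k \<le> b" "b < length \<sigma>"
      using ai unfolding b_def by auto
    have fa: "f a < length xs"
      using left ai(1) by simp
    have "length xs \<le> f b" "f b < length xs + length ys"
      using right f b unfolding pattern_embedding_def by auto
    then have fb: "length xs \<le> f b" "ys ! (f b - length xs) \<in> set ys"
      by (auto intro!: nth_mem)
    have "(xs ! f a < ys ! (f b - length xs)) = c"
      using assms(2) fa fb(2) unfolding separated_def by simp
    moreover have "((xs @ ys) ! f a < (xs @ ys) ! f b) = (x < y)"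
      using f ai(1,2,4) b assms(4) unfolding b_def pattern_embedding_def by simp
    ultimately show "(x < y) = c"
      using fa fb(1) by (simp add: nth_append)
  qed
  moreover have "take k \<sigma> \<noteq> []" "drop k \<sigma> \<noteq> []"
    using assms(3,4) by auto
  ultimately show ?thesis
    using decomposableI[of c "take k \<sigma>" "drop k \<sigma>"] by (metis append_take_drop_id)
qed

lemma pattern_embedding_threshold:
  assumes f: "pattern_embedding \<pi> \<sigma> f" and "\<exists>b < length \<sigma>. n \<le> f b"
  obtains k where "k < length \<sigma>" "\<forall>a < k. f a < n" "\<forall>b. k \<le> b \<and> b < length \<sigma> \<longrightarrow> n \<le> f b"
proof -
  define k where "k = (LEAST b. b < length \<sigma> \<and> n \<le> f b)"
  have k: "k < length \<sigma>" "n \<le> f k"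
    using LeastI_ex[of "\<lambda>b. b < length \<sigma> \<and> n \<le> f b"] assms(2) unfolding k_def by auto
  have "f a < n" if "a < k" for a
  proof (rule ccontr)
    assume "\<not> f a < n"
    then have "k \<le> a"
      unfolding k_def using that k by (intro Least_le) simp
    with that show False
      by simp
  qed
  moreover have "n \<le> f b" if "k \<le> b" "b < length \<sigma>" for b
    using f k that unfolding pattern_embedding_def by (metis le_neq_implies_less less_imp_le order_trans)
  ultimately show thesis
    using k(1) that by blast
qed

lemma contains_pattern_append_separated:
  assumes "contains_pattern (xs @ ys) \<sigma>" "separated c xs ys" "\<not> decomposable c \<sigma>"
  shows "contains_pattern xs \<sigma> \<or> contains_pattern ys \<sigma>"
proof -
  obtain f where f: "pattern_embedding (xs @ ys) \<sigma> f"
    using assms(1) unfolding contains_pattern_iff_embedding by blast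
  show ?thesis
  proof (cases "\<forall>a < length \<sigma>. f a < length xs")
    case True
    then show ?thesis
      using pattern_embedding_append_left[OF f] unfolding contains_pattern_iff_embedding by blast
  next
    case False
    then have "\<exists>b < length \<sigma>. length xs \<le> f b"
      by (auto simp: not_less)
    then obtain k where k: "k < length \<sigma>" and left: "\<forall>a < k. f a < length xs"
      and right: "\<forall>b. k \<le> b \<and> b < length \<sigma> \<longrightarrow> length xs \<le> f b"
      using pattern_embedding_threshold[OF f] by blast
    show ?thesis
    proof (cases "k = 0")
      case True
      then have "\<forall>a < length \<sigma>. length xs \<le> f a"
        using right by simp
      then have "pattern_embedding ys \<sigma> (\<lambda>a. f a - length xs)"
        by (rule pattern_embedding_append_right[OF f])
      then show ?thesis
        unfolding contains_pattern_iff_embedding by blast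
    next
      case False
      then have "decomposable c \<sigma>"
        by (intro decomposable_if_embedding_straddles[OF f assms(2) _ k left right]) simp
      with assms(3) show ?thesis
        by blast
    qed
  qed
qed

lemma decomposition_unique:
  assumes "xs @ ys = xs' @ ys'" "separated c xs ys" "separated c xs' ys'"
    "ys \<noteq> []" "ys' \<noteq> []" "\<not> decomposable c ys" "\<not> decomposable c ys'"
  shows "xs = xs'"
proof -
  obtain us where "xs = xs' @ us \<and> us @ ys = ys' \<or> xs @ us = xs' \<and> ys = us @ ys'"
    using assms(1) by (auto simp: append_eq_append_conv2)
  then show ?thesis
  proof (elim disjE conjE)
    assume "xs = xs' @ us" "us @ ys = ys'"
    moreover have "separated c us ys"
      by (rule separated_mono[OF assms(2)]) (use \<open>xs = xs' @ us\<close> in auto)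
    ultimately show ?thesis
      using assms(4,7) decomposableI[of c us ys] by auto
  next
    assume "xs @ us = xs'" "ys = us @ ys'"
    moreover have "separated c us ys'"
      by (rule separated_mono[OF assms(3)]) (use \<open>xs @ us = xs'\<close> in auto)
    ultimately show ?thesis
      using assms(5,6) decomposableI[of c us ys'] by auto
  qed
qed

lemma decomposition_indecomposable_right:
  "separated c xs ys \<Longrightarrow> xs \<noteq> [] \<Longrightarrow> ys \<noteq> [] \<Longrightarrow>
   \<exists>xs' ys'. xs @ ys = xs' @ ys' \<and> xs' \<noteq> [] \<and> ys' \<noteq> [] \<and> separated c xs' ys' \<and> \<not> decomposable c ys'"
proof (induction ys arbitrary: xs rule: length_induct)
  case (1 ys)
  show ?case
  proof (cases "decomposable c ys")
    case True
    then obtain us vs where uv: "ys = us @ vs" "us \<noteq> []" "vs \<noteq> []" "separated c us vs"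
      unfolding decomposable_def by blast
    have "separated c (xs @ us) vs"
      using "1.prems"(1) uv unfolding separated_def by auto
    moreover have "length vs < length ys"
      using uv by simp
    ultimately have "\<exists>xs' ys'. (xs @ us) @ vs = xs' @ ys' \<and> xs' \<noteq> [] \<and> ys' \<noteq> [] \<and>
        separated c xs' ys' \<and> \<not> decomposable c ys'"
      using "1.IH"[rule_format, of vs "xs @ us"] uv(2,3) by simp
    then show ?thesis
      using uv(1) by simp
  next
    case False
    then show ?thesis
      using "1.prems" by (intro exI[of _ xs] exI[of _ ys]) simp
  qed
qed

definition separable :: "nat list \<Rightarrow> bool" where
  "separable \<pi> \<longleftrightarrow> \<not> contains_pattern \<pi> [2,4,1,3] \<and> \<not> contains_pattern \<pi> [3,1,4,2]"

lemma separable_subseq: "subseq \<pi>' \<pi> \<Longrightarrow> separable \<pi> \<Longrightarrow> separable \<pi>'"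
  unfolding separable_def using contains_pattern_subseq by blast

lemma separable_map_strict_mono: "strict_mono h \<Longrightarrow> separable (map h \<pi>) \<longleftrightarrow> separable \<pi>"
  unfolding separable_def by (simp add: contains_pattern_map_strict_mono)

lemma separated_before_max:
  assumes "separable (xs @ m # w @ vs)" "distinct (xs @ m # w @ vs)"
    and "\<forall>z\<in>set (xs @ w @ vs). z < m" "separated True (xs @ w) vs" "vs \<noteq> []"
  shows "separated True xs (m # w @ vs)"
proof -
  have no_inversion: "\<not> z < x" if x: "x \<in> set xs" and z: "z \<in> set w" for x z
  proof
    assume "z < x"
    have v: "hd vs \<in> set vs" "x < hd vs" "hd vs < m"
      using assms(3-5) x unfolding separated_def by auto
    then have "contains_pattern [x, m, z, hd vs] [2,4,1,3]"
      using \<open>z < x\<close> by (intro contains_pattern_2413)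
    moreover have "subseq [x, m, z, hd vs] (xs @ [m] @ w @ vs)"
      using x z v(1) by (intro subseq_four) auto
    ultimately show False
      using assms(1) contains_pattern_subseq unfolding separable_def by auto
  qed
  have disjoint: "set xs \<inter> set w = {}"
    using assms(2) by auto
  show ?thesis
    unfolding separated_def
  proof (intro ballI)
    fix x z assume x: "x \<in> set xs" and z: "z \<in> set (m # w @ vs)"
    consider "z = m" | "z \<in> set w" | "z \<in> set vs"
      using z by auto
    then show "(x < z) = True"
    proof cases
      case 2
      then show ?thesis
        using no_inversion[OF x] disjoint x by (metis disjoint_iff linorder_neqE_nat)
    next
      case 3
      then show ?thesis
        using assms(4) x unfolding separated_def by auto
    qed (use assms(3) x in simp)
  qed
qed

lemma separated_after_max:
  assumes "separable (us @ w @ m # ys)" "distinct (us @ w @ m # ys)"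
    and "\<forall>z\<in>set (us @ w @ ys). z < m" "separated False us (w @ ys)" "us \<noteq> []"
  shows "separated False (us @ w @ [m]) ys"
proof -
  have no_ascent: "\<not> y < z" if y: "y \<in> set w" and z: "z \<in> set ys" for y z
  proof
    assume "y < z"
    have u: "hd us \<in> set us"
      using assms(5) by simp
    then have "z \<le> hd us" "hd us < m" "z \<noteq> hd us"
      using assms(2-4) z unfolding separated_def by (auto simp: not_less)
    then have "contains_pattern [hd us, y, m, z] [3,1,4,2]"
      using \<open>y < z\<close> by (intro contains_pattern_3142) auto
    moreover have "subseq [hd us, y, m, z] (us @ w @ [m] @ ys)"
      using y z u by (intro subseq_four) auto
    ultimately show False
      using assms(1) contains_pattern_subseq unfolding separable_def by auto
  qed
  have disjoint: "set w \<inter> set ys = {}"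
    using assms(2) by auto
  show ?thesis
    unfolding separated_def
  proof (intro ballI)
    fix y z assume y: "y \<in> set (us @ w @ [m])" and z: "z \<in> set ys"
    consider "y \<in> set us" | "y \<in> set w" | "y = m"
      using y by auto
    then show "(y < z) = False"
    proof cases
      case 1
      then show ?thesis
        using assms(4) z unfolding separated_def by auto
    next
      case 2
      then show ?thesis
        using no_ascent[OF _ z] disjoint z by (metis disjoint_iff linorder_neqE_nat)
    next
      case 3
      have "z < m"
        using assms(3) z by (simp add: ball_Un)
      then show ?thesis
        using 3 by simp
    qed
  qed
qed

lemma decomposable_insert_max_sum:
  assumes "decomposable True (xs @ ys)" "distinct (xs @ m # ys)" "\<forall>z\<in>set (xs @ ys). z < m"
    and "separable (xs @ m # ys)"
  shows "\<exists>c. decomposable c (xs @ m # ys)"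
proof -
  obtain us vs where uv: "xs @ ys = us @ vs" "us \<noteq> []" "vs \<noteq> []" "separated True us vs"
    using assms(1) unfolding decomposable_def by blast
  from uv(1) obtain w where "xs = us @ w \<and> w @ ys = vs \<or> xs @ w = us \<and> ys = w @ vs"
    by (auto simp: append_eq_append_conv2)
  then show ?thesis
  proof (elim disjE conjE)
    assume w: "xs = us @ w" "w @ ys = vs"
    then have "set (w @ ys) \<subseteq> set vs"
      by auto
    then have "separated True us (w @ m # ys)"
      using uv(4) assms(3) w(1) unfolding separated_def by auto
    then show ?thesis
      using uv(2) w(1) decomposableI[of True us "w @ m # ys"] by auto
  next
    assume w: "xs @ w = us" "ys = w @ vs"
    show ?thesis
    proof (cases "xs = []")
      case True
      have "\<forall>y\<in>set ys. y < m"
        using assms(3) by simp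
      then have "separated False [m] ys"
        unfolding separated_def by (auto simp: not_less less_imp_le)
      then show ?thesis
        using True w(2) uv(3) decomposableI[of False "[m]" ys] by auto
    next
      case False
      have "separated True xs (m # w @ vs)"
        using assms(2-4) uv(3,4) w by (intro separated_before_max) auto
      then show ?thesis
        using False w(2) decomposableI[of True xs "m # w @ vs"] by auto
    qed
  qed
qed

lemma decomposable_insert_max_skew:
  assumes "decomposable False (xs @ ys)" "distinct (xs @ m # ys)" "\<forall>z\<in>set (xs @ ys). z < m"
    and "separable (xs @ m # ys)"
  shows "\<exists>c. decomposable c (xs @ m # ys)"
proof -
  obtain us vs where uv: "xs @ ys = us @ vs" "us \<noteq> []" "vs \<noteq> []" "separated False us vs"
    using assms(1) unfolding decomposable_def by blast
  from uv(1) obtain w where "xs = us @ w \<and> w @ ys = vs \<or> xs @ w = us \<and> ys = w @ vs"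
    by (auto simp: append_eq_append_conv2)
  then show ?thesis
  proof (elim disjE conjE)
    assume w: "xs = us @ w" "w @ ys = vs"
    show ?thesis
    proof (cases "ys = []")
      case True
      have "separated True xs [m]"
        using assms(3) unfolding separated_def by simp
      then show ?thesis
        using True uv(2) w(1) decomposableI[of True xs "[m]"] by auto
    next
      case False
      have "separated False (us @ w @ [m]) ys"
        using assms(2-4) uv(2,4) w by (intro separated_after_max) auto
      then show ?thesis
        using False w(1) decomposableI[of False "xs @ [m]" ys] by auto
    qed
  next
    assume w: "xs @ w = us" "ys = w @ vs"
    have "\<forall>v\<in>set vs. v < m"
      using assms(3) w(2) by simp
    then have "separated False (xs @ m # w) vs"
      using uv(4) w(1) unfolding separated_def by (auto simp: not_less less_imp_le)
    then show ?thesis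
      using uv(3) w(2) decomposableI[of False "xs @ m # w" vs] by auto
  qed
qed

lemma split_at_Max:
  fixes zs :: "'a::linorder list"
  assumes "distinct zs" "zs \<noteq> []"
  obtains xs m ys where "zs = xs @ m # ys" "\<forall>z\<in>set (xs @ ys). z < m"
proof -
  define m where "m = Max (set zs)"
  have "m \<in> set zs"
    using assms(2) unfolding m_def by (intro Max_in) auto
  then obtain xs ys where zs: "zs = xs @ m # ys"
    by (meson split_list)
  have "z < m" if z: "z \<in> set (xs @ ys)" for z
  proof -
    have "z \<in> set zs"
      using z zs by auto
    then have "z \<le> m"
      unfolding m_def by (intro Max_ge) auto
    moreover have "z \<noteq> m"
      using assms(1) zs z by auto
    ultimately show ?thesis
      by simp
  qed
  then show thesis
    using zs that by blast
qed

lemma separable_decomposable: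
  assumes "distinct zs" "2 \<le> length zs" "separable zs"
  shows "\<exists>c. decomposable c zs"
  using assms
proof (induction zs rule: length_induct)
  case (1 zs)
  have "zs \<noteq> []"
    using "1.prems"(2) by auto
  then obtain xs m ys where zs: "zs = xs @ m # ys" and below: "\<forall>z\<in>set (xs @ ys). z < m"
    using split_at_Max[OF "1.prems"(1)] by blast
  show ?case
  proof (cases "length zs = 2")
    case True
    then obtain a b where "zs = [a, b]"
      by (metis length_0_conv length_Suc_conv numeral_2_eq_2)
    then have "decomposable (a < b) zs"
      using decomposableI[of "a < b" "[a]" "[b]"] by (simp add: separated_def)
    then show ?thesis ..
  next
    case False
    have "subseq (xs @ ys) zs"
      unfolding zs by (intro list_emb_append_mono) auto
    then have "separable (xs @ ys)"
      using separable_subseq "1.prems"(3) by blast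
    moreover have "distinct (xs @ ys)" "2 \<le> length (xs @ ys)" "length (xs @ ys) < length zs"
      using "1.prems"(1,2) False zs by auto
    ultimately obtain c where c: "decomposable c (xs @ ys)"
      using "1.IH"[rule_format, of "xs @ ys"] by blast
    show ?thesis
      unfolding zs
    proof (cases c)
      case True
      then show "\<exists>c. decomposable c (xs @ m # ys)"
        using c "1.prems"(1,3) below unfolding zs by (intro decomposable_insert_max_sum) simp_all
    next
      case False
      then show "\<exists>c. decomposable c (xs @ m # ys)"
        using c "1.prems"(1,3) below unfolding zs by (intro decomposable_insert_max_skew) simp_all
    qed
  qed
qed

lemma perms_of_length: "xs \<in> perms_of n \<Longrightarrow> length xs = n"
  unfolding perms_of_def using distinct_card by fastforce

definition perm_sum :: "bool \<Rightarrow> nat list \<Rightarrow> nat list \<Rightarrow> nat list" where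
  "perm_sum c xs ys =
     (if c then xs @ map (\<lambda>y. y + length xs) ys else map (\<lambda>x. x + length ys) xs @ ys)"

lemma length_perm_sum: "length (perm_sum c xs ys) = length xs + length ys"
  by (simp add: perm_sum_def)

lemma perm_sum_perms_of:
  assumes "xs \<in> perms_of m" "ys \<in> perms_of k"
  shows "perm_sum c xs ys \<in> perms_of (m + k)"
proof -
  have xs: "distinct xs" "set xs = {1..m}" "length xs = m"
    and ys: "distinct ys" "set ys = {1..k}" "length ys = k"
    using assms perms_of_length unfolding perms_of_def by auto
  have "inj (\<lambda>x. x + n :: nat)" for n
    by (simp add: inj_def)
  then show ?thesis
    unfolding perms_of_def perm_sum_def using xs ys
    by (auto simp: distinct_map inj_on_subset[of _ UNIV])
qed

lemma perm_sum_decomposition: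
  assumes "xs \<in> perms_of m" "ys \<in> perms_of k"
  obtains h h' where "strict_mono h" "strict_mono h'"
    "perm_sum c xs ys = map h xs @ map h' ys" "separated c (map h xs) (map h' ys)"
proof (cases c)
  case True
  have "separated True xs (map (\<lambda>y. y + m) ys)"
    using assms unfolding perms_of_def separated_def by auto
  then show thesis
    using True assms(1) perms_of_length strict_mono_id strict_mono_add[of m]
    by (intro that[of id "\<lambda>y. y + m"]) (simp_all add: perm_sum_def)
next
  case False
  have "separated False (map (\<lambda>x. x + k) xs) ys"
    using assms unfolding perms_of_def separated_def by auto
  then show thesis
    using False assms(2) perms_of_length strict_mono_add[of k] strict_mono_id
    by (intro that[of "\<lambda>x. x + k" id]) (simp_all add: perm_sum_def)
qed

lemma perm_sum_inj:
  assumes "perm_sum c xs ys = perm_sum c xs' ys'" "length xs = length xs'"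
  shows "xs = xs' \<and> ys = ys'"
proof -
  have shift_inj: "map (\<lambda>x. x + n) us = map (\<lambda>x. x + n) vs \<longleftrightarrow> us = vs" for n :: nat and us vs
    by (simp add: inj_def)
  show ?thesis
  proof (cases c)
    case True
    then have "xs @ map (\<lambda>y. y + length xs) ys = xs' @ map (\<lambda>y. y + length xs) ys'"
      using assms unfolding perm_sum_def by simp
    then show ?thesis
      using assms(2) by (simp add: shift_inj)
  next
    case False
    then have eq: "map (\<lambda>x. x + length ys) xs @ ys = map (\<lambda>x. x + length ys') xs' @ ys'"
      using assms(1) unfolding perm_sum_def by simp
    then have "ys = ys'"
      using assms(2) by simp
    then show ?thesis
      using eq by (simp add: shift_inj)
  qed
qed

lemma perms_of_lower_block:
  assumes "xs @ ys \<in> perms_of n" "separated True xs ys"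
  shows "set xs = {1..length xs}"
proof -
  have dist: "distinct xs" and sets: "set xs \<union> set ys = {1..n}"
    using assms(1) unfolding perms_of_def by auto
  have "{1..length xs} \<subseteq> set xs"
  proof
    fix v assume v: "v \<in> {1..length xs}"
    show "v \<in> set xs"
    proof (rule ccontr)
      assume "v \<notin> set xs"
      moreover have "length xs \<le> n"
        using perms_of_length[OF assms(1)] by simp
      ultimately have "v \<in> set ys"
        using v sets by auto
      then have "set xs \<subseteq> {1..v - 1}"
        using assms(2) sets unfolding separated_def by fastforce
      then have "card (set xs) \<le> v - 1"
        using card_mono[of "{1..v - 1}"] by fastforce
      then show False
        using v distinct_card[OF dist] by auto
    qed
  qed
  moreover have "card {1..length xs} = card (set xs)"
    using distinct_card[OF dist] by simp
  ultimately show ?thesis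
    by (intro card_subset_eq[symmetric]) simp_all
qed

lemma perms_of_upper_block:
  assumes "set ys = {Suc m..m + k}" "distinct ys"
  shows "map (\<lambda>y. y - m) ys \<in> perms_of k" "map (\<lambda>y. y + m) (map (\<lambda>y. y - m) ys) = ys"
proof -
  show shift_back: "map (\<lambda>y. y + m) (map (\<lambda>y. y - m) ys) = ys"
    using assms(1) by (auto intro!: map_idI)
  let ?ys = "map (\<lambda>y. y - m) ys"
  have "distinct (map (\<lambda>y. y + m) ?ys)"
    using shift_back assms(2) by simp
  then have "distinct ?ys"
    using distinct_map by blast
  moreover have "(\<lambda>y. y + m) ` set ?ys = set ys"
    using shift_back by (metis set_map)
  then have "(\<lambda>y. y + m) ` set ?ys = (\<lambda>y. y + m) ` {1..k}"
    using assms(1) by simp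
  then have "set ?ys = {1..k}"
    by (rule inj_image_eq_iff[THEN iffD1, rotated]) (simp add: inj_def)
  ultimately show "?ys \<in> perms_of k"
    unfolding perms_of_def by simp
qed

lemma perm_sum_of_separated:
  assumes "xs @ ys \<in> perms_of n" "separated c xs ys"
  obtains \<alpha> \<beta> h h' where "\<alpha> \<in> perms_of (length xs)" "\<beta> \<in> perms_of (length ys)"
    "xs @ ys = perm_sum c \<alpha> \<beta>" "strict_mono h" "strict_mono h'" "xs = map h \<alpha>" "ys = map h' \<beta>"
proof -
  have dist: "distinct xs" "distinct ys" "set xs \<inter> set ys = {}"
    and sets: "set xs \<union> set ys = {1..n}" and n: "n = length xs + length ys"
    using assms(1) perms_of_length[OF assms(1)] unfolding perms_of_def by auto
  show thesis
  proof (cases c)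
    case True
    then have xs: "set xs = {1..length xs}"
      using assms by (intro perms_of_lower_block[of xs ys n]) simp_all
    have "set ys = {1..n} - set xs"
      using sets dist(3) by blast
    then have "set ys = {Suc (length xs)..length xs + length ys}"
      using xs n by auto
    then show thesis
      using perms_of_upper_block[of ys "length xs" "length ys"] xs dist True
        strict_mono_id strict_mono_add[of "length xs"]
      by (intro that[of xs "map (\<lambda>y. y - length xs) ys" id "\<lambda>y. y + length xs"])
        (simp_all add: perms_of_def perm_sum_def)
  next
    case False
    have "separated True ys xs"
      using assms(2) False dist(3) unfolding separated_def by (auto simp: not_less order.order_iff_strict)
    moreover have "ys @ xs \<in> perms_of n"
      using assms(1) unfolding perms_of_def by auto
    ultimately have ys: "set ys = {1..length ys}"
      using perms_of_lower_block by blast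
    have "set xs = {1..n} - set ys"
      using sets dist(3) by blast
    then have "set xs = {Suc (length ys)..length ys + length xs}"
      using ys n by auto
    then show thesis
      using perms_of_upper_block[of xs "length ys" "length xs"] ys dist False
        strict_mono_add[of "length ys"] strict_mono_id
      by (intro that[of "map (\<lambda>x. x - length ys) xs" ys "\<lambda>x. x + length ys" id])
        (simp_all add: perms_of_def perm_sum_def)
  qed
qed

lemma des_conv_zip: "des xs = length (filter (\<lambda>(a, b). b < a) (zip xs (tl xs)))"
  unfolding des_def length_filter_conv_card by (rule arg_cong[where f = card]) (auto simp: nth_tl)

lemma des_Cons: "des (x # xs) = des xs + (if xs \<noteq> [] \<and> hd xs < x then 1 else 0)"
  by (cases xs) (simp_all add: des_conv_zip)

lemma des_append:
  "xs \<noteq> [] \<Longrightarrow> ys \<noteq> [] \<Longrightarrow> des (xs @ ys) = des xs + des ys + (if hd ys < last xs then 1 else 0)"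
  by (induction xs rule: list_nonempty_induct) (simp_all add: des_Cons des_def[of "[]"])

lemma des_map_strict_mono:
  assumes "strict_mono h"
  shows "des (map h xs) = des xs"
proof -
  have "zip (map h xs) (tl (map h xs)) = map (\<lambda>(a, b). (h a, h b)) (zip xs (tl xs))"
    by (simp add: map_tl[symmetric] zip_map_map)
  then show ?thesis
    by (simp add: des_conv_zip filter_map comp_def split_def strict_mono_less[OF assms])
qed

lemma des_append_separated:
  assumes "distinct (xs @ ys)" "separated c xs ys" "xs \<noteq> []" "ys \<noteq> []"
  shows "des (xs @ ys) = des xs + des ys + (if c then 0 else 1)"
proof -
  have "last xs \<in> set xs" "hd ys \<in> set ys"
    using assms(3,4) by simp_all
  then have "(last xs < hd ys) = c" "last xs \<noteq> hd ys"
    using assms(1,2) unfolding separated_def by auto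
  then show ?thesis
    using des_append[OF assms(3,4)] by auto
qed

lemma des_perm_sum:
  assumes "xs \<in> perms_of m" "ys \<in> perms_of k" "0 < m" "0 < k"
  shows "des (perm_sum c xs ys) = des xs + des ys + (if c then 0 else 1)"
proof -
  obtain h h' where h: "strict_mono h" "strict_mono h'"
    and split: "perm_sum c xs ys = map h xs @ map h' ys" "separated c (map h xs) (map h' ys)"
    using perm_sum_decomposition[OF assms(1,2)] .
  have "distinct (perm_sum c xs ys)"
    using perm_sum_perms_of[OF assms(1,2), of c] unfolding perms_of_def by blast
  then have "distinct (map h xs @ map h' ys)"
    unfolding split(1) .
  moreover have "xs \<noteq> []" "ys \<noteq> []"
    using assms perms_of_length by fastforce+
  ultimately show ?thesis
    using des_append_separated[OF _ split(2)] des_map_strict_mono h split(1) by simp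
qed

text \<open>Leaves stand for the permutation 1, so a tree with \<open>n - 1\<close> nodes yields a permutation of \<open>[n]\<close>.\<close>

fun tree_perm :: "bool tree \<Rightarrow> nat list" where
  "tree_perm Leaf = [1]"
| "tree_perm (Node l a r) = perm_sum a (tree_perm l) (tree_perm r)"

lemma tree_perm_perms_of: "tree_perm T \<in> perms_of (Suc (size T))"
proof (induction T)
  case Leaf
  then show ?case by (simp add: perms_of_def)
next
  case (Node l a r)
  then show ?case using perm_sum_perms_of[OF Node.IH, of a] by simp
qed

lemma length_tree_perm: "length (tree_perm T) = Suc (size T)"
  using perms_of_length[OF tree_perm_perms_of] .

lemma tree_perm_Node_decomposition:
  obtains h h' where "strict_mono h" "strict_mono h'"
    "tree_perm (Node l a r) = map h (tree_perm l) @ map h' (tree_perm r)"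
    "separated a (map h (tree_perm l)) (map h' (tree_perm r))"
  using perm_sum_decomposition[OF tree_perm_perms_of tree_perm_perms_of] by (metis tree_perm.simps(2))

lemma des_tree_perm: "des (tree_perm T) = n_ominus T"
proof (induction T)
  case Leaf
  then show ?case by (simp add: des_def)
next
  case (Node l a r)
  then show ?case
    using des_perm_sum[OF tree_perm_perms_of[of l] tree_perm_perms_of[of r]] by simp
qed

lemma separable_tree_perm: "separable (tree_perm T)"
proof (induction T)
  case Leaf
  have "\<not> contains_pattern [1] \<sigma>" if "length \<sigma> = 4" for \<sigma>
    using contains_pattern_length_le that by fastforce
  then show ?case
    unfolding separable_def by simp
next
  case (Node l a r)
  obtain h h' where h: "strict_mono h" "strict_mono h'"
    and split: "tree_perm (Node l a r) = map h (tree_perm l) @ map h' (tree_perm r)"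
      "separated a (map h (tree_perm l)) (map h' (tree_perm r))"
    by (rule tree_perm_Node_decomposition)
  have "\<not> contains_pattern (tree_perm (Node l a r)) \<sigma>"
    if "\<not> decomposable a \<sigma>" "\<not> contains_pattern (tree_perm l) \<sigma>" "\<not> contains_pattern (tree_perm r) \<sigma>"
    for \<sigma>
  proof
    assume "contains_pattern (tree_perm (Node l a r)) \<sigma>"
    then have "contains_pattern (map h (tree_perm l)) \<sigma> \<or> contains_pattern (map h' (tree_perm r)) \<sigma>"
      using contains_pattern_append_separated[OF _ split(2) that(1)] split(1) by simp
    then show False
      using that(2,3) h by (simp add: contains_pattern_map_strict_mono)
  qed
  then show ?case
    using Node.IH not_decomposable_2413 not_decomposable_3142 unfolding separable_def by blast
qed

lemma decomposable_tree_perm_Node: "decomposable a (tree_perm (Node l a r))"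
proof -
  obtain h h' where "tree_perm (Node l a r) = map h (tree_perm l) @ map h' (tree_perm r)"
      "separated a (map h (tree_perm l)) (map h' (tree_perm r))"
    by (rule tree_perm_Node_decomposition)
  moreover have "tree_perm l \<noteq> []" "tree_perm r \<noteq> []"
    using length_tree_perm by (metis Zero_not_Suc list.size(3))+
  ultimately show ?thesis
    using decomposableI by fastforce
qed

lemma disk_Node_iff:
  "disk (Node l a r) \<longleftrightarrow> disk l \<and> disk r \<and> \<not> decomposable a (tree_perm r)"
proof (cases r)
  case Leaf
  have "\<not> decomposable a [1::nat]"
    by (auto simp: decomposable_def Cons_eq_append_conv)
  then show ?thesis
    using Leaf by simp
next
  case (Node r1 b r2)
  have "decomposable b (tree_perm r)"
    unfolding Node by (rule decomposable_tree_perm_Node)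
  then have "decomposable a (tree_perm r) \<longleftrightarrow> b = a"
    using decomposable_hd_last by blast
  then show ?thesis
    using Node by auto
qed

lemma tree_perm_Node_inj:
  assumes "disk (Node l a r)" "disk (Node l' a r')" "tree_perm (Node l a r) = tree_perm (Node l' a r')"
  shows "tree_perm l = tree_perm l' \<and> tree_perm r = tree_perm r'"
proof -
  obtain h1 h1' where h1: "strict_mono h1'"
      "tree_perm (Node l a r) = map h1 (tree_perm l) @ map h1' (tree_perm r)"
      "separated a (map h1 (tree_perm l)) (map h1' (tree_perm r))"
    by (rule tree_perm_Node_decomposition)
  obtain h2 h2' where h2: "strict_mono h2'"
      "tree_perm (Node l' a r') = map h2 (tree_perm l') @ map h2' (tree_perm r')"
      "separated a (map h2 (tree_perm l')) (map h2' (tree_perm r'))"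
    by (rule tree_perm_Node_decomposition)
  have "map h1 (tree_perm l) = map h2 (tree_perm l')"
  proof (rule decomposition_unique)
    show "map h1 (tree_perm l) @ map h1' (tree_perm r) = map h2 (tree_perm l') @ map h2' (tree_perm r')"
      using assms(3) h1(2) h2(2) by simp
    show "\<not> decomposable a (map h1' (tree_perm r))" "\<not> decomposable a (map h2' (tree_perm r'))"
      using assms(1,2) h1(1) h2(1) disk_Node_iff by (simp_all add: decomposable_map_strict_mono)
  qed (use h1(3) h2(3) length_tree_perm in \<open>auto simp flip: length_0_conv\<close>)
  then have "length (tree_perm l) = length (tree_perm l')"
    by (metis length_map)
  then show ?thesis
    using assms(3) by (intro perm_sum_inj[where c = a]) simp_all
qed

lemma tree_perm_inj: "disk T \<Longrightarrow> disk T' \<Longrightarrow> tree_perm T = tree_perm T' \<Longrightarrow> T = T'"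
proof (induction T arbitrary: T')
  case Leaf
  then have "size T' = 0"
    using length_tree_perm[of T'] Leaf.prems(3)[symmetric] by simp
  then show ?case
    by (cases T') auto
next
  case (Node l a r)
  have "T' \<noteq> Leaf"
  proof
    assume "T' = Leaf"
    then have "length (tree_perm (Node l a r)) = 1"
      using Node.prems(3) by simp
    then show False
      using length_tree_perm[of "Node l a r"] by simp
  qed
  then obtain l' a' r' where T': "T' = Node l' a' r'"
    by (cases T') auto
  have "decomposable a' (tree_perm (Node l a r))"
    using Node.prems(3) T' decomposable_tree_perm_Node by simp
  then have "a' = a"
    using decomposable_tree_perm_Node decomposable_hd_last by blast
  then have "tree_perm l = tree_perm l' \<and> tree_perm r = tree_perm r'"
    using Node.prems T' by (intro tree_perm_Node_inj[of l a r]) simp_all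
  then show ?case
    using Node.IH Node.prems(1,2) T' \<open>a' = a\<close> by simp
qed

lemma separable_canonical_decomposition:
  assumes "\<pi> \<in> perms_of n" "separable \<pi>" "2 \<le> n"
  obtains c \<alpha> \<beta> where "\<pi> = perm_sum c \<alpha> \<beta>" "\<alpha> \<in> perms_of (length \<alpha>)" "\<beta> \<in> perms_of (length \<beta>)"
    "\<alpha> \<noteq> []" "\<beta> \<noteq> []" "separable \<alpha>" "separable \<beta>" "\<not> decomposable c \<beta>"
proof -
  have "distinct \<pi>" "2 \<le> length \<pi>"
    using assms(1,3) perms_of_length unfolding perms_of_def by auto
  then obtain c where "decomposable c \<pi>"
    using separable_decomposable assms(2) by blast
  then obtain xs0 ys0 where "\<pi> = xs0 @ ys0" "xs0 \<noteq> []" "ys0 \<noteq> []" "separated c xs0 ys0"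
    unfolding decomposable_def by blast
  then obtain xs ys where split: "\<pi> = xs @ ys" "xs \<noteq> []" "ys \<noteq> []"
      "separated c xs ys" "\<not> decomposable c ys"
    using decomposition_indecomposable_right[of c xs0 ys0] by auto
  have "xs @ ys \<in> perms_of n"
    using assms(1) split(1) by simp
  then obtain \<alpha> \<beta> h h' where perms: "\<alpha> \<in> perms_of (length xs)" "\<beta> \<in> perms_of (length ys)"
    and sum: "xs @ ys = perm_sum c \<alpha> \<beta>" and h: "strict_mono h" "strict_mono h'"
    and shifted: "xs = map h \<alpha>" "ys = map h' \<beta>"
    using perm_sum_of_separated[OF _ split(4)] by blast
  have "separable xs" "separable ys"
    using assms(2) separable_subseq split(1) by auto
  then have "separable \<alpha>" "separable \<beta>"
    using h shifted separable_map_strict_mono by auto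
  moreover have "\<not> decomposable c \<beta>"
    using split(5) shifted(2) h(2) by (simp add: decomposable_map_strict_mono)
  ultimately show thesis
    using that[of c \<alpha> \<beta>] split(1-3) sum perms shifted by simp
qed

lemma tree_perm_surj:
  assumes "\<pi> \<in> perms_of n" "separable \<pi>" "1 \<le> n"
  shows "\<exists>T. disk T \<and> size T = n - 1 \<and> tree_perm T = \<pi>"
  using assms
proof (induction n arbitrary: \<pi> rule: less_induct)
  case (less n)
  show ?case
  proof (cases "n = 1")
    case True
    then obtain x where "\<pi> = [x]"
      using less.prems(1) perms_of_length by (metis One_nat_def length_0_conv length_Suc_conv)
    then have "\<pi> = [1]"
      using less.prems(1) True unfolding perms_of_def by simp
    then show ?thesis
      using True by (intro exI[of _ Leaf]) simp
  next
    case False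
    then obtain c \<alpha> \<beta> where \<pi>: "\<pi> = perm_sum c \<alpha> \<beta>"
      and \<alpha>: "\<alpha> \<in> perms_of (length \<alpha>)" "\<alpha> \<noteq> []" "separable \<alpha>"
      and \<beta>: "\<beta> \<in> perms_of (length \<beta>)" "\<beta> \<noteq> []" "separable \<beta>" "\<not> decomposable c \<beta>"
      using separable_canonical_decomposition[OF less.prems(1,2)] less.prems(3) by (metis Suc_1 Suc_leI le_neq_implies_less)
    have n: "n = length \<alpha> + length \<beta>"
      using less.prems(1) perms_of_length \<pi> length_perm_sum by metis
    obtain l where l: "disk l" "size l = length \<alpha> - 1" "tree_perm l = \<alpha>"
      using less.IH[of "length \<alpha>" \<alpha>] \<alpha> \<beta>(2) n by (auto simp: Suc_le_eq)
    obtain r where r: "disk r" "size r = length \<beta> - 1" "tree_perm r = \<beta>"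
      using less.IH[of "length \<beta>" \<beta>] \<beta> \<alpha>(2) n by (auto simp: Suc_le_eq)
    have "disk (Node l c r)"
      using l(1) r(1,3) \<beta>(4) disk_Node_iff by blast
    moreover obtain p q where "length \<alpha> = Suc p" "length \<beta> = Suc q"
      using \<alpha>(2) \<beta>(2) by (metis length_0_conv not0_implies_Suc)
    then have "size (Node l c r) = n - 1"
      using l(2) r(2) n by simp
    ultimately show ?thesis
      using \<pi> l(3) r(3) by (intro exI[of _ "Node l c r"]) simp
  qed
qed

lemma bij_betw_tree_perm:
  assumes "1 \<le> n"
  shows "bij_betw tree_perm (disk_trees n) {\<pi> \<in> perms_of n. separable \<pi>}"
proof (rule bij_betw_imageI)
  show "inj_on tree_perm (disk_trees n)"
    unfolding disk_trees_def using tree_perm_inj by (auto intro: inj_onI)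
  show "tree_perm ` disk_trees n = {\<pi> \<in> perms_of n. separable \<pi>}"
  proof
    show "tree_perm ` disk_trees n \<subseteq> {\<pi> \<in> perms_of n. separable \<pi>}"
    proof
      fix \<pi> assume "\<pi> \<in> tree_perm ` disk_trees n"
      then obtain T where "size T = n - 1" "\<pi> = tree_perm T"
        unfolding disk_trees_def by auto
      then show "\<pi> \<in> {\<pi> \<in> perms_of n. separable \<pi>}"
        using assms tree_perm_perms_of[of T] separable_tree_perm[of T] by simp
    qed
    show "{\<pi> \<in> perms_of n. separable \<pi>} \<subseteq> tree_perm ` disk_trees n"
      using assms tree_perm_surj unfolding disk_trees_def by fastforce
  qed
qed

theorem corollary2p16:
  fixes n :: nat
  assumes "n \<ge> 1"
  shows "(\<Sum>\<pi>\<in>avoiding_perms n [[2,4,1,3],[3,1,4,2]]. [:0,1::int:] ^ des \<pi>)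
       = (\<Sum>T\<in>disk_trees n. [:0,1::int:] ^ n_ominus T)"
proof -
  have "avoiding_perms n [[2,4,1,3],[3,1,4,2]] = {\<pi> \<in> perms_of n. separable \<pi>}"
    unfolding avoiding_perms_def separable_def by auto
  then have "(\<Sum>\<pi>\<in>avoiding_perms n [[2,4,1,3],[3,1,4,2]]. [:0,1::int:] ^ des \<pi>)
      = (\<Sum>T\<in>disk_trees n. [:0,1::int:] ^ des (tree_perm T))"
    using sum.reindex_bij_betw[OF bij_betw_tree_perm[OF assms], of "\<lambda>\<pi>. [:0,1::int:] ^ des \<pi>"]
    by (simp only:)
  also have "\<dots> = (\<Sum>T\<in>disk_trees n. [:0,1::int:] ^ n_ominus T)"
    by (simp add: des_tree_perm)
  finally show ?thesis .
qed

end
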